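(* Let $\mathcal{G}$, $u$, $v$ be as in the context (finite bicoloured graph with both a pure green and a pure red path from $u$ to $v$, and with fixed weights). Then for every $r$ with $0\le r<r_{tot}$ there exists a red edge $e$ of $\mathcal{G}$ with $\Delta(r)=\Delta_e(r)$.
   Context: $\mathcal{G}=\langle V,E,\omega,\lambda\rangle$ is a finite weighted coloured--edge graph (directed multigraph, weights $\omega:E\to\mathbb{R}^+$, colours $\lambda:E\to M$) with $M=\{\text{red},\text{green}\}$. A path from $u$ to $v$ is a sequence of consecutive edges from $u$ to $v$ visiting no vertex twice; $\omega_{\text{red}}(p)$, $\omega_{\text{green}}(p)$ denote the sums of weights of the red, resp. green, edges of $p$. A path $p$ from $u$ to $v$ is minimal if there is no path $q$ from $u$ to $v$ with $\omega_{\text{red}}(q)\le\omega_{\text{red}}(p)$, $\omega_{\text{green}}(q)\le\omega_{\text{green}}(p)$ and at least one of these inequalities strict. It is assumed there is a path from $u$ to $v$ all of whose edges are green and a path from $u$ to $v$ all of whose edges are red; $r_{tot}$ is the least red weight of a path from $u$ to $v$ all of whose edges are red. For a red edge $e$ and $r\ge0$: $g_r$ is the least value of $\omega_{\text{green}}(p)$ over all paths $p$ from $u$ to $v$ not containing $e$ with $\omega_{\text{red}}(p)\le r$; $\Delta_e(r)$ is the least value of $\omega_{\text{red}}(q)$ over all paths $q$ from $u$ to $v$ containing $e$ with $\omega_{\text{green}}(q)<g_r$, or $\infty$ if no such path exists. For $0\le r<r_{tot}$, $\Delta(r)$ is the least value of $\omega_{\text{red}}(q)$ over all minimal paths $q$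 from $u$ to $v$ with $\omega_{\text{red}}(q)>r$ (so $\Delta(r)>r$). *)

theory Defs
  imports "HOL-Library.Extended_Real"
begin

datatype colour = Red | Green

definition wf_graph ::
  "'v set \<Rightarrow> 'e set \<Rightarrow> ('e \<Rightarrow> 'v) \<Rightarrow> ('e \<Rightarrow> 'v) \<Rightarrow> ('e \<Rightarrow> real) \<Rightarrow> bool" where
  "wf_graph V E src tgt w \<longleftrightarrow> finite V \<and> finite E \<and>
     (\<forall>e\<in>E. src e \<in> V \<and> tgt e \<in> V) \<and> (\<forall>e\<in>E. w e > 0)"

definition is_path ::
  "'e set \<Rightarrow> ('e \<Rightarrow> 'v) \<Rightarrow> ('e \<Rightarrow> 'v) \<Rightarrow> 'v \<Rightarrow> 'v \<Rightarrow> 'e list \<Rightarrow> bool" where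
  "is_path E src tgt a b p \<longleftrightarrow>
     set p \<subseteq> E \<and>
     (if p = [] then a = b
      else src (hd p) = a \<and> tgt (last p) = b \<and>
           (\<forall>i. Suc i < length p \<longrightarrow> tgt (p ! i) = src (p ! Suc i))) \<and>
     distinct (a # map tgt p)"

definition wcol :: "('e \<Rightarrow> real) \<Rightarrow> ('e \<Rightarrow> colour) \<Rightarrow> colour \<Rightarrow> 'e list \<Rightarrow> real" where
  "wcol w col c p = (\<Sum>e\<leftarrow>p. if col e = c then w e else 0)"

abbreviation wred where "wred w col p \<equiv> wcol w col Red p"
abbreviation wgreen where "wgreen w col p \<equiv> wcol w col Green p"

definition minimal_path ::
  "'e set \<Rightarrow> ('e \<Rightarrow> 'v) \<Rightarrow> ('e \<Rightarrow> 'v) \<Rightarrow> ('e \<Rightarrow> real) \<Rightarrow> ('e \<Rightarrow> colour) \<Rightarrow> 'v \<Rightarrow> 'v \<Rightarrow> 'e list \<Rightarrow> bool" where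
  "minimal_path E src tgt w col a b p \<longleftrightarrow> is_path E src tgt a b p \<and>
     \<not> (\<exists>q. is_path E src tgt a b q \<and> wred w col q \<le> wred w col p \<and> wgreen w col q \<le> wgreen w col p \<and>
            (wred w col q < wred w col p \<or> wgreen w col q < wgreen w col p))"

definition r_tot ::
  "'e set \<Rightarrow> ('e \<Rightarrow> 'v) \<Rightarrow> ('e \<Rightarrow> 'v) \<Rightarrow> ('e \<Rightarrow> real) \<Rightarrow> ('e \<Rightarrow> colour) \<Rightarrow> 'v \<Rightarrow> 'v \<Rightarrow> real" where
  "r_tot E src tgt w col a b =
     Inf {wred w col p | p. is_path E src tgt a b p \<and> (\<forall>e\<in>set p. col e = Red)}"

definition g_r ::
  "'e set \<Rightarrow> ('e \<Rightarrow> 'v) \<Rightarrow> ('e \<Rightarrow> 'v) \<Rightarrow> ('e \<Rightarrow> real) \<Rightarrow> ('e \<Rightarrow> colour) \<Rightarrow> 'v \<Rightarrow> 'v \<Rightarrow> 'e \<Rightarrow> real \<Rightarrow> real" where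
  "g_r E src tgt w col a b e r =
     Inf {wgreen w col p | p. is_path E src tgt a b p \<and> e \<notin> set p \<and> wred w col p \<le> r}"

text \<open>\<Delta>_e(r), with value \<infinity> (Inf of the empty set of extended reals) if no such path exists.\<close>
definition Delta_e ::
  "'e set \<Rightarrow> ('e \<Rightarrow> 'v) \<Rightarrow> ('e \<Rightarrow> 'v) \<Rightarrow> ('e \<Rightarrow> real) \<Rightarrow> ('e \<Rightarrow> colour) \<Rightarrow> 'v \<Rightarrow> 'v \<Rightarrow> 'e \<Rightarrow> real \<Rightarrow> ereal" where
  "Delta_e E src tgt w col a b e r =
     Inf {ereal (wred w col q) | q. is_path E src tgt a b q \<and> e \<in> set q \<and>
            wgreen w col q < g_r E src tgt w col a b e r}"

definition Delta ::
  "'e set \<Rightarrow> ('e \<Rightarrow> 'v) \<Rightarrow> ('e \<Rightarrow> 'v) \<Rightarrow> ('e \<Rightarrow> real) \<Rightarrow> ('e \<Rightarrow> colour) \<Rightarrow> 'v \<Rightarrow> 'v \<Rightarrow> real \<Rightarrow> ereal" where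
  "Delta E src tgt w col a b r =
     Inf {ereal (wred w col q) | q. minimal_path E src tgt w col a b q \<and> wred w col q > r}"

end

theory Submission
  imports Defs
begin

(*
  Paths are simple, so a finite graph has only finitely many
  paths; hence every infimum in the definitions is attained.  Let q be a
  minimal path of least red weight above r, so that Delta(r) = R(q), and let
  p be a path of red weight at most r with least green weight.  Since
  R(p) <= r < R(q), minimality of q forces G(q) < G(p), and since the red
  weight of q exceeds that of p, q has a red edge e not on p.  For this e,
  g_r = G(p) (p avoids e and is optimal), q itself competes in Delta_e(r),
  and every competitor q' is dominated by a minimal path of red weight above
  r, so Delta_e(r) = R(q) = Delta(r).
*)

lemma wcol_nonneg: "\<forall>e\<in>set p. 0 < w e \<Longrightarrow> 0 \<le> wcol w col c p"
  unfolding wcol_def by (induction p) auto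

lemma wcol_le_zero_no_colour:
  "\<forall>e\<in>set p. 0 < w e \<Longrightarrow> wcol w col c p \<le> 0 \<Longrightarrow> \<forall>e\<in>set p. col e \<noteq> c"
proof (induction p)
  case Nil
  then show ?case by simp
next
  case (Cons a p)
  have "0 \<le> wcol w col c p"
    using Cons.prems by (intro wcol_nonneg) auto
  moreover have "wcol w col c (a # p) = (if col a = c then w a else 0) + wcol w col c p"
    unfolding wcol_def by simp
  ultimately show ?case
    using Cons by (auto split: if_splits)
qed

lemma wcol_other_colour: "\<forall>e\<in>set p. col e = d \<Longrightarrow> d \<noteq> c \<Longrightarrow> wcol w col c p = 0"
  unfolding wcol_def by (induction p) auto

lemma wcol_mono_colour_edges:
  assumes "distinct q" "distinct p" "\<forall>e\<in>set p. 0 < w e"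
    and "{e \<in> set q. col e = c} \<subseteq> set p"
  shows "wcol w col c q \<le> wcol w col c p"
proof -
  let ?f = "\<lambda>e. if col e = c then w e else 0"
  have "wcol w col c q = sum ?f (set q)"
    using assms(1) unfolding wcol_def by (simp add: sum_list_distinct_conv_sum_set)
  also have "\<dots> = sum ?f {e \<in> set q. col e = c}"
    by (rule sum.mono_neutral_right) auto
  also have "\<dots> \<le> sum ?f (set p)"
    by (rule sum_mono2[OF _ assms(4)]) (use assms(3) in auto)
  also have "\<dots> = wcol w col c p"
    using assms(2) unfolding wcol_def by (simp add: sum_list_distinct_conv_sum_set)
  finally show ?thesis .
qed

lemma ex_least_solution:
  fixes f :: "'a \<Rightarrow> 'b :: linorder"
  assumes "finite {x. P x}" "P x0"
  obtains x where "P x" "\<And>y. P y \<Longrightarrow> f x \<le> f y"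
proof
  let ?S = "{x. P x}"
  have "?S \<noteq> {}" using assms(2) by blast
  then show "P (arg_min_on f ?S)" "\<And>y. P y \<Longrightarrow> f (arg_min_on f ?S) \<le> f y"
    using arg_min_if_finite(1) arg_min_least assms(1) by fastforce+
qed

lemma Inf_ereal_attained:
  assumes "P x" "\<And>y. P y \<Longrightarrow> f x \<le> f y"
  shows "Inf {ereal (f y) | y. P y} = ereal (f x)"
  by (rule Inf_eqI) (use assms in auto)

locale positive_graph =
  fixes E :: "'e set" and src tgt :: "'e \<Rightarrow> 'v" and w :: "'e \<Rightarrow> real" and col :: "'e \<Rightarrow> colour"
  assumes finite_edges: "finite E"
    and positive_weights: "\<And>e. e \<in> E \<Longrightarrow> 0 < w e"
begin

lemma path_edges: "is_path E src tgt a b p \<Longrightarrow> set p \<subseteq> E"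
  unfolding is_path_def by simp

lemma path_distinct: "is_path E src tgt a b p \<Longrightarrow> distinct p"
  unfolding is_path_def by (simp add: distinct_map)

lemma path_weights_positive: "is_path E src tgt a b p \<Longrightarrow> \<forall>e\<in>set p. 0 < w e"
  using path_edges positive_weights by blast

lemma minimal_path_is_path: "minimal_path E src tgt w col a b p \<Longrightarrow> is_path E src tgt a b p"
  unfolding minimal_path_def by simp

text \<open>Paths repeat no edge, so there are finitely many of them.\<close>
lemma finite_paths: "finite {p. is_path E src tgt a b p}"
proof (rule finite_subset[OF _ finite_lists_length_le[OF finite_edges, of "card E"]])
  show "{p. is_path E src tgt a b p} \<subseteq> {xs. set xs \<subseteq> E \<and> length xs \<le> card E}"
  proof clarify
    fix p assume p: "is_path E src tgt a b p"
    have "length p = card (set p)"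
      using path_distinct[OF p] by (simp add: distinct_card)
    also have "\<dots> \<le> card E"
      using path_edges[OF p] finite_edges by (rule card_mono[rotated])
    finally show "set p \<subseteq> E \<and> length p \<le> card E"
      using path_edges[OF p] by simp
  qed
qed

lemma finite_paths_with: "finite {p. is_path E src tgt a b p \<and> Q p}"
  by (rule finite_subset[OF _ finite_paths]) auto

lemma finite_minimal_paths_with: "finite {p. minimal_path E src tgt w col a b p \<and> Q p}"
  by (rule finite_subset[OF _ finite_paths]) (auto dest: minimal_path_is_path)

text \<open>Every path is dominated in both colours by a minimal path: take a dominating
  path of least total weight.\<close>
lemma dominated_by_minimal_path:
  assumes "is_path E src tgt a b p"
  obtains m where "minimal_path E src tgt w col a b m"
    "wred w col m \<le> wred w col p" "wgreen w col m \<le> wgreen w col p"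
proof -
  let ?dom = "\<lambda>q. is_path E src tgt a b q \<and> wred w col q \<le> wred w col p \<and> wgreen w col q \<le> wgreen w col p"
  obtain m where m: "?dom m"
    and least: "\<And>q. ?dom q \<Longrightarrow> wred w col m + wgreen w col m \<le> wred w col q + wgreen w col q"
    using ex_least_solution[of ?dom p "\<lambda>q. wred w col q + wgreen w col q"]
      finite_paths_with assms by auto
  have "minimal_path E src tgt w col a b m"
    unfolding minimal_path_def
  proof (intro conjI notI)
    show "is_path E src tgt a b m" using m by simp
  next
    assume "\<exists>q. is_path E src tgt a b q \<and> wred w col q \<le> wred w col m \<and> wgreen w col q \<le> wgreen w col m
              \<and> (wred w col q < wred w col m \<or> wgreen w col q < wgreen w col m)"
    then obtain q where q: "is_path E src tgt a b q" "wred w col q \<le> wred w col m"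
      "wgreen w col q \<le> wgreen w col m" "wred w col q < wred w col m \<or> wgreen w col q < wgreen w col m"
      by blast
    with m have "?dom q" by auto
    with least q(2-4) show False by fastforce
  qed
  with m that show ?thesis by blast
qed

lemma r_tot_le_red_path:
  assumes "is_path E src tgt a b p" "\<forall>e\<in>set p. col e = Red"
  shows "r_tot E src tgt w col a b \<le> wred w col p"
  unfolding r_tot_def
  by (rule cInf_lower)
     (use assms in \<open>auto intro!: bdd_belowI[where m=0] wcol_nonneg dest: path_weights_positive\<close>)

text \<open>Below r_tot there is a minimal path of larger red weight: a minimal path
  dominating an all-red path has no green weight, hence is itself all red.\<close>
lemma minimal_path_above:
  assumes "is_path E src tgt a b p" "\<forall>e\<in>set p. col e = Red"
    and "r < r_tot E src tgt w col a b"
  obtains m where "minimal_path E src tgt w col a b m" "r < wred w col m"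
proof -
  obtain m where m: "minimal_path E src tgt w col a b m" "wgreen w col m \<le> wgreen w col p"
    using dominated_by_minimal_path[OF assms(1)] by blast
  have m_path: "is_path E src tgt a b m"
    using m(1) by (rule minimal_path_is_path)
  have "wgreen w col p = 0"
    using wcol_other_colour[OF assms(2)] by simp
  then have "\<forall>e\<in>set m. col e \<noteq> Green"
    using wcol_le_zero_no_colour[OF path_weights_positive[OF m_path]] m(2) by simp
  then have "\<forall>e\<in>set m. col e = Red"
    by (metis colour.exhaust)
  then have "r_tot E src tgt w col a b \<le> wred w col m"
    using m_path by (rule r_tot_le_red_path[rotated])
  with m(1) assms(3) that show ?thesis by simp
qed

context
  fixes a b :: 'v and r :: real and q p :: "'e list"
  assumes q_minimal: "minimal_path E src tgt w col a b q"
    and q_above: "r < wred w col q"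
    and q_least: "\<And>q'. minimal_path E src tgt w col a b q' \<Longrightarrow> r < wred w col q' \<Longrightarrow>
                        wred w col q \<le> wred w col q'"
    and p_path: "is_path E src tgt a b p"
    and p_below: "wred w col p \<le> r"
    and p_least: "\<And>p'. is_path E src tgt a b p' \<Longrightarrow> wred w col p' \<le> r \<Longrightarrow>
                        wgreen w col p \<le> wgreen w col p'"
begin

lemma green_weight_below: "wgreen w col q < wgreen w col p"
proof (rule ccontr)
  assume "\<not> wgreen w col q < wgreen w col p"
  then have "wgreen w col p \<le> wgreen w col q" by simp
  moreover have "wred w col p < wred w col q"
    using p_below q_above by simp
  ultimately have "is_path E src tgt a b p \<and> wred w col p \<le> wred w col q \<and>
      wgreen w col p \<le> wgreen w col q \<and> (wred w col p < wred w col q \<or> wgreen w col p < wgreen w col q)"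
    using p_path by simp
  then show False
    using q_minimal unfolding minimal_path_def by blast
qed

text \<open>Since q is heavier in red than p, some red edge of q avoids p.\<close>
lemma red_edge_off_path: "\<exists>e\<in>set q. col e = Red \<and> e \<notin> set p"
proof (rule ccontr)
  assume "\<not> (\<exists>e\<in>set q. col e = Red \<and> e \<notin> set p)"
  then have "{e \<in> set q. col e = Red} \<subseteq> set p" by blast
  then have "wred w col q \<le> wred w col p"
    using wcol_mono_colour_edges path_distinct path_weights_positive
      minimal_path_is_path[OF q_minimal] p_path by blast
  with p_below q_above show False by simp
qed

lemma Delta_eq: "Delta E src tgt w col a b r = ereal (wred w col q)"
  unfolding Delta_def by (rule Inf_ereal_attained) (use q_minimal q_above q_least in auto)

lemma g_r_eq:
  assumes "e \<notin> set p"
  shows "g_r E src tgt w col a b e r = wgreen w col p"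
  unfolding g_r_def by (rule cInf_eq_minimum) (use assms p_path p_below p_least in auto)

text \<open>A path beating p in green weight is dominated by a minimal path which,
  by optimality of p, has red weight above r; hence it is no lighter in red than q.\<close>
lemma red_weight_lower_bound:
  assumes "is_path E src tgt a b q'" "wgreen w col q' < wgreen w col p"
  shows "wred w col q \<le> wred w col q'"
proof -
  obtain m where m: "minimal_path E src tgt w col a b m"
    "wred w col m \<le> wred w col q'" "wgreen w col m \<le> wgreen w col q'"
    using dominated_by_minimal_path[OF assms(1)] by blast
  have "r < wred w col m"
  proof (rule ccontr)
    assume "\<not> r < wred w col m"
    then have "wgreen w col p \<le> wgreen w col m"
      using p_least[OF minimal_path_is_path[OF m(1)]] by simp
    with m(3) assms(2) show False by simp
  qed
  then show ?thesis
    using q_least[OF m(1)] m(2) by simp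
qed

text \<open>For a red edge e of q avoided by p, q attains Delta_e(r) as well.\<close>
lemma Delta_eq_Delta_e_at_red_edge:
  obtains e where "e \<in> E" "col e = Red"
    "Delta E src tgt w col a b r = Delta_e E src tgt w col a b e r"
proof -
  obtain e where e: "e \<in> set q" "col e = Red" "e \<notin> set p"
    using red_edge_off_path by blast
  have "Delta_e E src tgt w col a b e r = ereal (wred w col q)"
    unfolding Delta_e_def g_r_eq[OF e(3)]
    by (rule Inf_ereal_attained)
       (use e(1) minimal_path_is_path[OF q_minimal] green_weight_below red_weight_lower_bound in auto)
  moreover have "e \<in> E"
    using e(1) path_edges[OF minimal_path_is_path[OF q_minimal]] by blast
  ultimately show ?thesis
    using that e(2) Delta_eq by simp
qed

end

end

theorem lemma5:
  fixes V :: "'v set" and E :: "'e set" and src tgt :: "'e \<Rightarrow> 'v"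
    and w :: "'e \<Rightarrow> real" and col :: "'e \<Rightarrow> colour" and u v :: 'v and r :: real
  assumes "wf_graph V E src tgt w"
    and "u \<in> V" and "v \<in> V"
    and "\<exists>p. is_path E src tgt u v p \<and> (\<forall>e\<in>set p. col e = Green)"
    and "\<exists>p. is_path E src tgt u v p \<and> (\<forall>e\<in>set p. col e = Red)"
    and "0 \<le> r" and "r < r_tot E src tgt w col u v"
  shows "\<exists>e\<in>E. col e = Red \<and> Delta E src tgt w col u v r = Delta_e E src tgt w col u v e r"
proof -
  interpret positive_graph E src tgt w col
    using assms(1) unfolding wf_graph_def by unfold_locales auto
  obtain red_path where "is_path E src tgt u v red_path" "\<forall>e\<in>set red_path. col e = Red"
    using assms(5) by blast
  then obtain m where m: "minimal_path E src tgt w col u v m \<and> r < wred w col m"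
    using minimal_path_above assms(7) by blast
  obtain q where q: "minimal_path E src tgt w col u v q \<and> r < wred w col q"
    and q_least: "\<And>q'. minimal_path E src tgt w col u v q' \<and> r < wred w col q' \<Longrightarrow>
                          wred w col q \<le> wred w col q'"
    using ex_least_solution[where f = "wred w col",
        OF finite_minimal_paths_with[of u v "\<lambda>q. r < wred w col q"] m] by blast
  obtain green_path where green: "is_path E src tgt u v green_path" "\<forall>e\<in>set green_path. col e = Green"
    using assms(4) by blast
  have "wred w col green_path \<le> r"
    using wcol_other_colour[OF green(2)] assms(6) by simp
  with green(1) obtain p where p: "is_path E src tgt u v p \<and> wred w col p \<le> r"
    and p_least: "\<And>p'. is_path E src tgt u v p' \<and> wred w col p' \<le> r \<Longrightarrow>
                          wgreen w col p \<le> wgreen w col p'"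
    using ex_least_solution[OF finite_paths_with[of u v "\<lambda>p. wred w col p \<le> r"]] by blast
  obtain e where "e \<in> E" "col e = Red"
    "Delta E src tgt w col u v r = Delta_e E src tgt w col u v e r"
    using Delta_eq_Delta_e_at_red_edge[of u v q r p] q q_least p p_least by auto
  then show ?thesis by blast
qed

end
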